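(* Let $(\mathsf K,\mathsf D)$ be a differential ring, $n\ge1$, $L=\sum_{i=0}^n\binom{n}{i}a_i\mathsf D^{n-i}\in\mathsf K\langle\mathsf D\rangle$ with $a_0=1$, and $f\in\mathsf K^\times$. Put $u:=f^{-1}\mathsf D(f)$ and write $$f^{-1}Lf=\sum_{k=0}^n\binom nk\tilde a_k\mathsf D^{n-k}.$$ Then for each $k=0,1,\dots,n$, $$\tilde a_k=\sum_{j=0}^k\binom kj\,(f^{-1}a_{k-j}f)\,P_j(u).$$
   Context: $(\mathsf K,\mathsf D)$: unital associative ring with derivation; $\mathsf K\langle\mathsf D\rangle$: Ore algebra, coefficients on the left, $\mathsf D a=a\mathsf D+\mathsf D(a)$. For $u\in\mathsf K$ the noncommutative Bell polynomials $P_m(u)\in\mathsf K$ are defined by $P_0(u)=1$, $P_{m+1}(u)=\mathsf D(P_m(u))+u\,P_m(u)$. *)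

theory Defs
  imports Main
begin

definition derivation :: "('a::ring_1 \<Rightarrow> 'a) \<Rightarrow> bool" where
  "derivation D \<longleftrightarrow> (\<forall>a b. D (a + b) = D a + D b) \<and> (\<forall>a b. D (a * b) = D a * b + a * D b)"

text \<open>Elements of the Ore algebra K<D> are represented by coefficient functions
  p :: nat => 'a, p k being the (left) coefficient of D^k.\<close>

definition ore_scal :: "'a::ring_1 \<Rightarrow> nat \<Rightarrow> 'a" where
  "ore_scal c = (\<lambda>k. if k = 0 then c else 0)"

text \<open>Left multiplication by D, using D a = a D + D(a):
  D (sum_k p_k D^k) = sum_k (p_k D^(k+1) + D(p_k) D^k).\<close>
definition ore_Dmul :: "('a::ring_1 \<Rightarrow> 'a) \<Rightarrow> (nat \<Rightarrow> 'a) \<Rightarrow> nat \<Rightarrow> 'a" where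
  "ore_Dmul D p = (\<lambda>k. (if k = 0 then 0 else p (k - 1)) + D (p k))"

definition ore_mul :: "('a::ring_1 \<Rightarrow> 'a) \<Rightarrow> nat \<Rightarrow> (nat \<Rightarrow> 'a) \<Rightarrow> (nat \<Rightarrow> 'a) \<Rightarrow> nat \<Rightarrow> 'a" where
  "ore_mul D n p q = (\<lambda>k. \<Sum>i\<le>n. p i * ((ore_Dmul D ^^ i) q) k)"

primrec bellP :: "('a::ring_1 \<Rightarrow> 'a) \<Rightarrow> 'a \<Rightarrow> nat \<Rightarrow> 'a" where
  "bellP D u 0 = 1"
| "bellP D u (Suc m) = D (bellP D u m) + u * bellP D u m"

end

theory Submission
  imports Defs
begin

text \<open>Conjugating \<open>L\<close> by \<open>f\<close> amounts to computing the product \<open>L f\<close> in \<open>K\<langle>D\<rangle>\<close>.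
  Expanding each \<open>D^i f\<close> by the Leibniz rule \<open>D^i f = \<Sum>\<^sub>m (i choose m) D^(i-m)(f) D^m\<close> and
  regrouping with \<open>(n choose k-j) (n-k+j choose j) = (n choose k) (k choose j)\<close>, the coefficient of
  \<open>(n choose k) D^(n-k)\<close> in \<open>L f\<close> becomes \<open>\<Sum>\<^sub>j (k choose j) a(k-j) D^j(f)\<close>. Finally
  \<open>f P\<^sub>j(u) = D^j(f)\<close> for the logarithmic derivative \<open>u = f\<^sup>-\<^sup>1 D(f)\<close>, because both
  sides satisfy \<open>y\<^sub>0 = f\<close> and \<open>y\<^sub>j\<^sub>+\<^sub>1 = D(y\<^sub>j)\<close>.\<close>

lemma of_nat_mult_left_commute: "of_nat c * (x * y) = x * (of_nat c * y :: 'a::semiring_1)"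
  by (metis mult.assoc mult_of_nat_commute)

lemma of_nat_mult_of_nat_mult:
  "of_nat c * x * (of_nat d * y) = of_nat (c * d) * (x * y :: 'a::semiring_1)"
  by (metis mult.assoc mult_of_nat_commute of_nat_mult)

lemma choose_mult_shifted:
  fixes j k n :: nat
  assumes "j \<le> k" "k \<le> n"
  shows "(n choose (k - j)) * ((n - k + j) choose j) = (n choose k) * (k choose j)"
  using choose_mult[of "k - j" k n] binomial_symmetric[of j k] assms by simp

lemma derivation_zero:
  assumes "derivation D"
  shows "D 0 = 0"
proof -
  have "D (0 + 0) = D 0 + D 0"
    using assms unfolding derivation_def by blast
  then show ?thesis by simp
qed

lemma derivation_of_nat_mult:
  assumes "derivation D"
  shows "D (of_nat c * x) = of_nat c * D x"
proof (induction c)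
  case 0
  then show ?case using assms by (simp add: derivation_zero)
next
  case (Suc c)
  have "D (of_nat (Suc c) * x) = D x + D (of_nat c * x)"
    using assms unfolding derivation_def by (simp add: distrib_right)
  then show ?case using Suc by (simp add: distrib_right)
qed

lemma ore_Dmul_power_scal:
  assumes "derivation D"
  shows "((ore_Dmul D ^^ i) (ore_scal c)) m =
    (if m \<le> i then of_nat (i choose m) * (D ^^ (i - m)) c else 0)"
proof (induction i arbitrary: m)
  case 0
  then show ?case by (simp add: ore_scal_def)
next
  case (Suc i)
  have step: "((ore_Dmul D ^^ Suc i) (ore_scal c)) m =
      (if m = 0 then 0 else ((ore_Dmul D ^^ i) (ore_scal c)) (m - 1))
      + D (((ore_Dmul D ^^ i) (ore_scal c)) m)"
    by (simp add: ore_Dmul_def)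
  consider "m = 0" | m' where "m = Suc m'" "m' < i" | m' where "m = Suc m'" "i \<le> m'"
    by (metis not_less not0_implies_Suc)
  then show ?case
  proof cases
    case 1
    then show ?thesis
      unfolding step Suc.IH using assms by (simp add: derivation_of_nat_mult)
  next
    case (2 m')
    then obtain r where r: "i - m' = Suc r" "i - m = r"
      by (metis Suc_diff_Suc)
    have "((ore_Dmul D ^^ Suc i) (ore_scal c)) m
        = of_nat (i choose m') * (D ^^ Suc r) c + of_nat (i choose m) * (D ^^ Suc r) c"
      unfolding step Suc.IH using assms 2 r by (simp add: derivation_of_nat_mult)
    also have "\<dots> = of_nat (Suc i choose m) * (D ^^ (Suc i - m)) c"
      using 2 r by (simp add: distrib_right)
    finally show ?thesis using 2 by simp
  next
    case (3 m')
    then show ?thesis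
      unfolding step Suc.IH using assms by (auto simp add: derivation_of_nat_mult derivation_zero)
  qed
qed

lemma ore_mul_scal_left: "ore_mul D 0 (ore_scal c) p = (\<lambda>m. c * p m)"
  by (simp add: ore_mul_def ore_scal_def)

lemma ore_mul_scal_right:
  assumes "derivation D"
  shows "ore_mul D n p (ore_scal c) m = (\<Sum>i=m..n. p i * (of_nat (i choose m) * (D ^^ (i - m)) c))"
proof -
  have "ore_mul D n p (ore_scal c) m
      = (\<Sum>i\<le>n. if m \<le> i then p i * (of_nat (i choose m) * (D ^^ (i - m)) c) else 0)"
    unfolding ore_mul_def ore_Dmul_power_scal[OF assms] by (intro sum.cong) auto
  also have "\<dots> = (\<Sum>i\<in>{..n} \<inter> {i. m \<le> i}. p i * (of_nat (i choose m) * (D ^^ (i - m)) c))"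
    by (simp add: sum.inter_restrict)
  also have "{..n} \<inter> {i. m \<le> i} = {m..n}"
    by auto
  finally show ?thesis .
qed

definition ore_binomial :: "nat \<Rightarrow> (nat \<Rightarrow> 'a::ring_1) \<Rightarrow> nat \<Rightarrow> 'a" where
  "ore_binomial n a = (\<lambda>m. if m \<le> n then of_nat (n choose (n - m)) * a (n - m) else 0)"

lemma ore_binomial_mul_scal_coeff:
  assumes "derivation D" "k \<le> n"
  shows "ore_mul D n (ore_binomial n a) (ore_scal c) (n - k)
    = of_nat (n choose k) * (\<Sum>j\<le>k. of_nat (k choose j) * (a (k - j) * (D ^^ j) c))"
proof -
  let ?t = "\<lambda>i. ore_binomial n a i * (of_nat (i choose (n - k)) * (D ^^ (i - (n - k))) c)"
  have "ore_mul D n (ore_binomial n a) (ore_scal c) (n - k) = sum ?t {0 + (n - k)..k + (n - k)}"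
    unfolding ore_mul_scal_right[OF assms(1)] using assms(2) by simp
  also have "\<dots> = (\<Sum>j\<le>k. ?t (j + (n - k)))"
    by (simp only: sum.shift_bounds_cl_nat_ivl atLeast0AtMost)
  also have "\<dots> = (\<Sum>j\<le>k. of_nat (n choose k) * (of_nat (k choose j) * (a (k - j) * (D ^^ j) c)))"
  proof (rule sum.cong[OF refl])
    fix j assume "j \<in> {..k}"
    then have j: "j \<le> k" by simp
    have idx: "j + (n - k) \<le> n" "n - (j + (n - k)) = k - j" "j + (n - k) - (n - k) = j"
      using j assms(2) by auto
    have "(j + (n - k)) choose (n - k) = (n - k + j) choose j"
      by (metis add.commute add_diff_cancel_right' binomial_symmetric le_add2)
    then have "?t (j + (n - k))
        = of_nat (n choose (k - j)) * a (k - j) * (of_nat ((n - k + j) choose j) * (D ^^ j) c)"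
      by (simp only: ore_binomial_def idx if_True)
    also have "\<dots> = of_nat ((n choose (k - j)) * ((n - k + j) choose j)) * (a (k - j) * (D ^^ j) c)"
      by (rule of_nat_mult_of_nat_mult)
    also have "\<dots> = of_nat (n choose k) * (of_nat (k choose j) * (a (k - j) * (D ^^ j) c))"
      unfolding choose_mult_shifted[OF j assms(2)] by (simp add: mult.assoc)
    finally show "?t (j + (n - k)) = \<dots>" .
  qed
  finally show ?thesis
    by (simp add: sum_distrib_left)
qed

lemma mult_bellP_logderiv:
  assumes "derivation D" "f * finv = 1"
  shows "f * bellP D (finv * D f) j = (D ^^ j) f"
proof (induction j)
  case 0
  then show ?case by simp
next
  case (Suc j)
  have "f * bellP D (finv * D f) (Suc j)
      = f * D (bellP D (finv * D f) j) + D f * bellP D (finv * D f) j"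
    using assms(2) by (simp add: distrib_left mult.assoc[symmetric])
  also have "\<dots> = D (f * bellP D (finv * D f) j)"
    using assms(1) unfolding derivation_def by (simp add: add.commute)
  finally show ?case using Suc by simp
qed

theorem mainTheorem3:
  fixes D :: "'a::ring_1 \<Rightarrow> 'a" and n :: nat and a :: "nat \<Rightarrow> 'a" and f finv :: 'a
  assumes "derivation D"
    and "n \<ge> 1"
    and "a 0 = 1"
    and "f * finv = 1" and "finv * f = 1"
  defines "L \<equiv> (\<lambda>m. if m \<le> n then of_nat (n choose (n - m)) * a (n - m) else 0)"
    and "u \<equiv> finv * D f"
  shows "(\<forall>m>n. ore_mul D 0 (ore_scal finv) (ore_mul D n L (ore_scal f)) m = 0) \<and>
         (\<forall>k\<le>n. ore_mul D 0 (ore_scal finv) (ore_mul D n L (ore_scal f)) (n - k)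
                 = of_nat (n choose k) *
                   (\<Sum>j\<le>k. of_nat (k choose j) * (finv * a (k - j) * f) * bellP D u j))"
proof -
  have L: "L = ore_binomial n a"
    unfolding L_def ore_binomial_def ..
  have bell_sum: "(\<Sum>j\<le>k. of_nat (k choose j) * (finv * a (k - j) * f) * bellP D u j)
      = finv * (\<Sum>j\<le>k. of_nat (k choose j) * (a (k - j) * (D ^^ j) f))" for k
    unfolding u_def sum_distrib_left
    by (simp add: mult.assoc mult_bellP_logderiv[OF assms(1,4)] of_nat_mult_left_commute)
  have "ore_mul D n L (ore_scal f) m = 0" if "m > n" for m
    using that by (simp add: ore_mul_scal_right[OF assms(1)])
  moreover have "finv * ore_mul D n L (ore_scal f) (n - k)
      = of_nat (n choose k) * (\<Sum>j\<le>k. of_nat (k choose j) * (finv * a (k - j) * f) * bellP D u j)"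
    if "k \<le> n" for k
    unfolding L ore_binomial_mul_scal_coeff[OF assms(1) that] bell_sum
    by (rule of_nat_mult_left_commute[symmetric])
  ultimately show ?thesis
    unfolding ore_mul_scal_left by simp
qed

end
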